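(* Consider an $n$-th order strictly proper SISO system with transfer function \[ P(s)=\frac{y(s)}{u(s)}=\frac{b_1s^{n-1}+\dots+b_{n-1}s+b_n}{s^n+a_1s^{n-1}+\dots+a_{n-1}s+a_n}, \] with unknown coefficients $a_i\in[\underline a_i,\bar a_i]$ and $b_j\in[\underline b_j,\bar b_j]$ for $i,j=1,\dots,n$. Let $c_0=[1,0,\dots,0]$ and let $A_0\in\mathbb{R}^{n\times n}$ be a strictly stable matrix in observable canonical form with characteristic polynomial $s^n+\hat a_1s^{n-1}+\dots+\hat a_n$ (ones on the superdiagonal, first column $-[\hat a_1,\dots,\hat a_n]^T$, zeros elsewhere). Realize the system as $\dot x=A_0x+b_yy+b_uu$, $y=c_0x$, with $b_y=[\hat a_1-a_1,\dots,\hat a_n-a_n]^T$ and $b_u=[b_1,\dots,b_n]^T$. Let $\theta_y,\theta_u$ satisfy $\dot\theta_y=A_0^T\theta_y+c_0^Ty$, $\dot\theta_u=A_0^T\theta_u+c_0^Tu$; let $C_0$ be the observability matrix of $(c_0,A_0)$, $\Theta_y,\Theta_u$ the controllability matrices $[\theta,A_0^T\theta,\dots,(A_0^T)^{n-1}\theta]$ for $\theta=\theta_y,\theta_u$, and $E_y=C_0^{-1}\Theta_y^T$, $E_u=C_0^{-1}\Theta_u^T$. Define $\hat x(b_y,b_u)=E_yb_y+E_ub_u$, and let $\hat x(b_{yi},b_{ui})$, $i=1,\dots,N$, be all the vertices of the convex hull of the points $E_y[\hat a_1-a_1,\dots,\hat a_n-a_n]^T+E_u[b_1,\dots,b_n]^T$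 with $a_i\in\{\underline a_i,\bar a_i\}$, $b_j\in\{\underline b_j,\bar b_j\}$. Let $\epsilon_0=x(0)-\hat x(0)$, with $\hat x$ evaluated at the true coefficients. Let $Q_1,\dots,Q_{n_q}\succ0$, define \[ V_c(x)=\min_{\gamma}\,x^T\Big(\sum_{j=1}^{n_q}\gamma_jQ_j\Big)^{-1}x\quad\text{over }\gamma_j\ge0,\ \textstyle\sum_j\gamma_j=1, \] and $\|x\|_c=V_c(x)^{1/2}$. If for all $j=1,\dots,n_q$ \[ A_0Q_j+Q_jA_0^T+2\alpha Q_j\preceq0, \] then for every $t\ge0$ there exists $i\in\{1,\dots,N\}$ such that \[ \|x(t)\|_c\le\|\hat x(b_{yi},b_{ui})(t)\|_c+e^{-\alpha t}\|\epsilon_0\|_c. \]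
   Context: The unit level set of $V_c$ is the convex hull of the ellipsoids $\{x: x^TQ_j^{-1}x\le1\}$, so $\|\cdot\|_c$ is a norm on $\mathbb{R}^n$. $\hat x(b_{yi},b_{ui})(t)$ denotes $E_y(t)b_{yi}+E_u(t)b_{ui}$. *)

theory Defs
  imports "HOL-Analysis.Analysis"
begin

text \<open>Coordinates of R^n are the finite type 'n, enumerated by a bijection
  idx :: nat => 'n from {..<CARD('n)}; coordinate idx k is the paper's index k+1.\<close>

definition pos :: "(nat \<Rightarrow> 'n::finite) \<Rightarrow> 'n \<Rightarrow> nat" where
  "pos idx p = inv_into {..<CARD('n)} idx p"

definition obs_canon :: "(nat \<Rightarrow> 'n::finite) \<Rightarrow> real^'n \<Rightarrow> real^'n^'n" where
  "obs_canon idx ahat = (\<chi> p q. if q = idx 0 then - (ahat $ p)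
       else if pos idx q = pos idx p + 1 then 1 else 0)"

fun mpow :: "real^'n^'n \<Rightarrow> nat \<Rightarrow> real^'n^'n" where
  "mpow A 0 = mat 1"
| "mpow A (Suc k) = A ** mpow A k"

definition obs_matrix :: "(nat \<Rightarrow> 'n::finite) \<Rightarrow> real^'n \<Rightarrow> real^'n^'n \<Rightarrow> real^'n^'n" where
  "obs_matrix idx c A = (\<chi> p. c v* mpow A (pos idx p))"

text \<open>Transpose of the controllability matrix [th, A0^T th, ..., (A0^T)^(n-1) th]:
  row k is (A0^T)^k th.\<close>
definition ctrb_T :: "(nat \<Rightarrow> 'n::finite) \<Rightarrow> real^'n^'n \<Rightarrow> real^'n \<Rightarrow> real^'n^'n" where
  "ctrb_T idx A th = (\<chi> p. mpow (transpose A) (pos idx p) *v th)"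

definition pos_def_mat :: "real^'n^'n \<Rightarrow> bool" where
  "pos_def_mat Q \<longleftrightarrow> transpose Q = Q \<and> (\<forall>v. v \<noteq> 0 \<longrightarrow> v \<bullet> (Q *v v) > 0)"

definition neg_semidef_mat :: "real^'n^'n \<Rightarrow> bool" where
  "neg_semidef_mat M \<longleftrightarrow> (\<forall>v. v \<bullet> (M *v v) \<le> 0)"

definition Vc :: "nat \<Rightarrow> (nat \<Rightarrow> real^'n^'n) \<Rightarrow> real^'n \<Rightarrow> real" where
  "Vc nq Q x = Inf {x \<bullet> (matrix_inv (\<Sum>j<nq. \<gamma> j *\<^sub>R Q j) *v x) | \<gamma>.
       (\<forall>j<nq. 0 \<le> \<gamma> j) \<and> (\<Sum>j<nq. \<gamma> j) = 1}"

definition cnorm :: "nat \<Rightarrow> (nat \<Rightarrow> real^'n^'n) \<Rightarrow> real^'n \<Rightarrow> real" where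
  "cnorm nq Q x = sqrt (Vc nq Q x)"

end

theory Submission
  imports Defs
begin

text \<open>The error \<open>e = x - x_hat\<close> of the estimate at the true coefficients satisfies
  \<open>e' = A0 e\<close>: the filters \<open>\<theta>\<^sub>y, \<theta>\<^sub>u\<close> regenerate the terms \<open>b\<^sub>y y\<close> and \<open>b\<^sub>u u\<close>, because
  \<open>C0\<^sup>-\<^sup>1 \<Theta>\<^sup>T\<close> turns \<open>A0\<^sup>T\<close> acting on \<open>\<theta>\<close> into \<open>A0\<close> acting on the estimate (Cayley--Hamilton
  for the companion form). The LMI survives convex combinations of the \<open>Q\<^sub>j\<close>, so every
  \<open>e\<^sup>T (\<Sum>\<gamma>\<^sub>j Q\<^sub>j)\<^sup>-\<^sup>1 e\<close> decays like \<open>exp(-2\<alpha>t)\<close>, whence \<open>\<parallel>e(t)\<parallel>\<^sub>c \<le> exp(-\<alpha>t) \<parallel>e(0)\<parallel>\<^sub>c\<close>.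
  The estimate at time \<open>t\<close> is an affine image of a point of the parameter box, hence lies in the
  convex hull of the vertex estimates, where the convex function \<open>\<parallel>\<cdot>\<parallel>\<^sub>c\<close> is maximal at an
  extreme point; the triangle inequality for \<open>\<parallel>\<cdot>\<parallel>\<^sub>c\<close> combines the two bounds.\<close>

lemma matrix_inv_invertible:
  fixes A :: "real^'n^'n"
  assumes "invertible A"
  shows "A ** matrix_inv A = mat 1" "matrix_inv A ** A = mat 1"
proof -
  have "\<exists>A'. A ** A' = mat 1 \<and> A' ** A = mat 1" using assms unfolding invertible_def by blast
  then have "A ** matrix_inv A = mat 1 \<and> matrix_inv A ** A = mat 1"
    unfolding matrix_inv_def by (rule someI_ex)
  then show "A ** matrix_inv A = mat 1" "matrix_inv A ** A = mat 1" by simp_all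
qed

lemma invertible_if_trivial_kernel:
  fixes A :: "real^'n^'n"
  assumes "\<And>x. A *v x = 0 \<Longrightarrow> x = 0"
  shows "invertible A"
  using assms matrix_left_invertible_ker invertible_left_inverse by blast

lemma symmetric_matrix_inner_commute:
  fixes P :: "real^'n^'n"
  assumes "transpose P = P"
  shows "(P *v a) \<bullet> b = a \<bullet> (P *v b)"
  by (metis assms dot_lmul_matrix transpose_matrix_vector)

lemma pos_def_mat_symmetric: "pos_def_mat P \<Longrightarrow> transpose P = P"
  unfolding pos_def_mat_def by blast

lemma pos_def_mat_nonneg: "pos_def_mat P \<Longrightarrow> 0 \<le> v \<bullet> (P *v v)"
  unfolding pos_def_mat_def by (cases "v = 0") (auto intro: less_imp_le)

lemma pos_def_mat_invertible:
  assumes "pos_def_mat P"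
  shows "invertible P"
proof (rule invertible_if_trivial_kernel)
  fix x assume "P *v x = 0"
  then have "x \<bullet> (P *v x) = 0" by simp
  then show "x = 0" using assms unfolding pos_def_mat_def by force
qed

lemma pos_def_mat_inverse_cancel:
  assumes "pos_def_mat P"
  shows "P *v (matrix_inv P *v v) = v" "matrix_inv P *v (P *v v) = v"
  using matrix_inv_invertible[OF pos_def_mat_invertible[OF assms]]
  by (simp_all add: matrix_vector_mul_assoc)

lemma pos_def_mat_inverse_inner_commute:
  assumes "pos_def_mat P"
  shows "x \<bullet> (matrix_inv P *v w) = (matrix_inv P *v x) \<bullet> w"
proof -
  have "x \<bullet> (matrix_inv P *v w) = (P *v (matrix_inv P *v x)) \<bullet> (matrix_inv P *v w)"
    using pos_def_mat_inverse_cancel(1)[OF assms] by simp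
  also have "\<dots> = (matrix_inv P *v x) \<bullet> (P *v (matrix_inv P *v w))"
    by (rule symmetric_matrix_inner_commute[OF pos_def_mat_symmetric[OF assms]])
  finally show ?thesis using pos_def_mat_inverse_cancel(1)[OF assms] by simp
qed

lemma pos_def_mat_inverse_nonneg:
  assumes "pos_def_mat P"
  shows "0 \<le> x \<bullet> (matrix_inv P *v x)"
proof -
  have "x \<bullet> (matrix_inv P *v x) = (matrix_inv P *v x) \<bullet> (P *v (matrix_inv P *v x))"
    using pos_def_mat_inverse_cancel(1)[OF assms] by (simp add: inner_commute)
  then show ?thesis using pos_def_mat_nonneg[OF assms] by simp
qed

lemma inner_le_inverse_quadratic:
  fixes P :: "real^'n^'n"
  assumes P: "pos_def_mat P" and "l > 0"
  shows "2 * (z \<bullet> x) - l * (z \<bullet> (P *v z)) \<le> (x \<bullet> (matrix_inv P *v x)) / l"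
proof -
  let ?w = "matrix_inv P *v x"
  have Pw: "P *v ?w = x" by (rule pos_def_mat_inverse_cancel(1)[OF P])
  have wPz: "?w \<bullet> (P *v z) = z \<bullet> x"
    using symmetric_matrix_inner_commute[OF pos_def_mat_symmetric[OF P], of ?w z] Pw
    by (simp add: inner_commute)
  have "P *v (l *\<^sub>R z - ?w) = l *\<^sub>R (P *v z) - x"
    using Pw by (simp add: matrix_vector_mult_diff_distrib matrix_vector_mult_scaleR)
  then have "(l *\<^sub>R z - ?w) \<bullet> (P *v (l *\<^sub>R z - ?w))
      = l * l * (z \<bullet> (P *v z)) - l * (z \<bullet> x) - l * (?w \<bullet> (P *v z)) + ?w \<bullet> x"
    by (simp add: inner_diff_left inner_diff_right algebra_simps)
  also have "\<dots> = l * l * (z \<bullet> (P *v z)) - 2 * l * (z \<bullet> x) + x \<bullet> ?w"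
    by (simp add: wPz inner_commute[of ?w x])
  finally have "0 \<le> l * l * (z \<bullet> (P *v z)) - 2 * l * (z \<bullet> x) + x \<bullet> ?w"
    using pos_def_mat_nonneg[OF P, of "l *\<^sub>R z - ?w"] by simp
  then have "l * (2 * (z \<bullet> x) - l * (z \<bullet> (P *v z))) \<le> x \<bullet> ?w" by (simp add: algebra_simps)
  then show ?thesis using assms(2) by (simp add: field_simps mult.commute)
qed

lemma sum_matrix_vector_mult: "(\<Sum>i\<in>S. M i) *v v = (\<Sum>i\<in>S. M i *v v)"
  by (induction S rule: infinite_finite_induct) (simp_all add: matrix_vector_mult_add_rdistrib)

section \<open>Quadratic Lyapunov functions\<close>

lemma le_exp_mult_of_derivative_le:
  fixes W W' :: "real \<Rightarrow> real"
  assumes W: "\<And>s. s \<ge> 0 \<Longrightarrow> (W has_real_derivative W' s) (at s within {0..})"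
    and rate: "\<And>s. s \<ge> 0 \<Longrightarrow> W' s \<le> c * W s"
    and "t \<ge> 0"
  shows "W t \<le> exp (c * t) * W 0"
proof -
  define g where "g s = exp (- c * s) * W s" for s
  have g: "(g has_real_derivative exp (- c * s) * (W' s - c * W s)) (at s within {0..})"
    if "s \<ge> 0" for s
    unfolding g_def using W[OF that]
    by (auto intro!: derivative_eq_intros simp: algebra_simps)
  have "g t \<le> g 0"
  proof (rule DERIV_nonpos_imp_decreasing_open[OF \<open>t \<ge> 0\<close>])
    fix s assume s: "0 < s" "s < t"
    have "at s within {0..} = at s" by (rule at_within_open_subset[of _ "{0<..}"]) (use s in auto)
    then show "\<exists>y. (g has_real_derivative y) (at s) \<and> y \<le> 0"
      using g[of s] rate[of s] s by (auto intro!: mult_nonneg_nonpos)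
  next
    show "continuous_on {0..t} g"
      unfolding continuous_on_eq_continuous_within
    proof
      fix s assume "s \<in> {0..t}"
      then have "continuous (at s within {0..}) g" using g by (auto intro: DERIV_continuous)
      then show "continuous (at s within {0..t}) g" by (rule continuous_within_subset) auto
    qed
  qed
  then show ?thesis unfolding g_def by (simp add: exp_minus field_simps)
qed

lemma lyapunov_rate:
  fixes A P :: "real^'n^'n"
  assumes P: "pos_def_mat P"
    and lmi: "neg_semidef_mat (A ** P + P ** transpose A + (2 * \<alpha>) *\<^sub>R P)"
  shows "(matrix_inv P *v x) \<bullet> (A *v x) \<le> - \<alpha> * (x \<bullet> (matrix_inv P *v x))"
proof -
  define v where "v = matrix_inv P *v x"
  have Pv: "P *v v = x" unfolding v_def by (rule pos_def_mat_inverse_cancel(1)[OF P])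
  have "v \<bullet> (P *v (transpose A *v v)) = (P *v v) \<bullet> (transpose A *v v)"
    by (rule symmetric_matrix_inner_commute[OF pos_def_mat_symmetric[OF P], symmetric])
  also have "\<dots> = v \<bullet> (A *v x)"
    using Pv dot_lmul_matrix[of v A x] by (simp add: inner_commute[of x])
  finally have "v \<bullet> ((A ** P + P ** transpose A + (2 * \<alpha>) *\<^sub>R P) *v v)
      = 2 * (v \<bullet> (A *v x)) + 2 * \<alpha> * (v \<bullet> x)"
    using Pv by (simp add: matrix_vector_mult_add_rdistrib matrix_vector_mul_assoc[symmetric]
        scaleR_matrix_vector_assoc[symmetric] inner_add_right)
  then have "2 * (v \<bullet> (A *v x)) + 2 * \<alpha> * (v \<bullet> x) \<le> 0"
    using lmi unfolding neg_semidef_mat_def by metis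
  then show ?thesis unfolding v_def by (simp add: inner_commute[of _ x])
qed

lemma lyapunov_decay:
  fixes A P :: "real^'n^'n" and e :: "real \<Rightarrow> real^'n"
  assumes P: "pos_def_mat P"
    and lmi: "neg_semidef_mat (A ** P + P ** transpose A + (2 * \<alpha>) *\<^sub>R P)"
    and e: "\<forall>s\<ge>0. (e has_vector_derivative A *v e s) (at s within {0..})"
    and "t \<ge> 0"
  shows "e t \<bullet> (matrix_inv P *v e t) \<le> exp (- (2 * \<alpha>) * t) * (e 0 \<bullet> (matrix_inv P *v e 0))"
proof (rule le_exp_mult_of_derivative_le[OF _ _ \<open>t \<ge> 0\<close>])
  let ?R = "matrix_inv P"
  fix s :: real assume "s \<ge> 0"
  then have de: "(e has_vector_derivative A *v e s) (at s within {0..})" using e by blast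
  have "((\<lambda>s. e s \<bullet> (?R *v e s)) has_vector_derivative
      e s \<bullet> (?R *v (A *v e s)) + (A *v e s) \<bullet> (?R *v e s)) (at s within {0..})"
    by (intro bounded_bilinear.has_vector_derivative[OF bounded_bilinear_inner de]
        bounded_linear.has_vector_derivative[OF matrix_vector_mul_bounded_linear de])
  moreover have "e s \<bullet> (?R *v (A *v e s)) + (A *v e s) \<bullet> (?R *v e s) = 2 * ((?R *v e s) \<bullet> (A *v e s))"
    using pos_def_mat_inverse_inner_commute[OF P] by (simp add: inner_commute)
  ultimately show "((\<lambda>s. e s \<bullet> (?R *v e s)) has_real_derivative 2 * ((?R *v e s) \<bullet> (A *v e s)))
      (at s within {0..})"
    by (simp add: has_real_derivative_iff_has_vector_derivative)
  show "2 * ((?R *v e s) \<bullet> (A *v e s)) \<le> - (2 * \<alpha>) * (e s \<bullet> (?R *v e s))"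
    using lyapunov_rate[OF P lmi, of "e s"] by simp
qed

section \<open>The norm \<open>\<parallel>\<cdot>\<parallel>\<^sub>c\<close>\<close>

definition simplex_weights :: "nat \<Rightarrow> (nat \<Rightarrow> real) \<Rightarrow> bool" where
  "simplex_weights nq \<gamma> \<longleftrightarrow> (\<forall>j<nq. 0 \<le> \<gamma> j) \<and> (\<Sum>j<nq. \<gamma> j) = 1"

definition mixed_mat :: "nat \<Rightarrow> (nat \<Rightarrow> real^'n^'n) \<Rightarrow> (nat \<Rightarrow> real) \<Rightarrow> real^'n^'n" where
  "mixed_mat nq Q \<gamma> = (\<Sum>j<nq. \<gamma> j *\<^sub>R Q j)"

definition mixed_quad :: "nat \<Rightarrow> (nat \<Rightarrow> real^'n^'n) \<Rightarrow> (nat \<Rightarrow> real) \<Rightarrow> real^'n \<Rightarrow> real" where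
  "mixed_quad nq Q \<gamma> x = x \<bullet> (matrix_inv (mixed_mat nq Q \<gamma>) *v x)"

lemma Vc_eq_Inf_mixed_quad: "Vc nq Q x = Inf {mixed_quad nq Q \<gamma> x | \<gamma>. simplex_weights nq \<gamma>}"
  by (simp add: Vc_def mixed_quad_def mixed_mat_def simplex_weights_def)

lemma mixed_mat_mult_vec: "mixed_mat nq Q \<gamma> *v v = (\<Sum>j<nq. \<gamma> j *\<^sub>R (Q j *v v))"
  by (simp add: mixed_mat_def sum_matrix_vector_mult scaleR_matrix_vector_assoc)

lemma pos_def_mat_mixed_mat:
  assumes Q: "\<forall>j<nq. pos_def_mat (Q j)" and \<gamma>: "simplex_weights nq \<gamma>"
  shows "pos_def_mat (mixed_mat nq Q \<gamma>)"
  unfolding pos_def_mat_def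
proof (intro conjI allI impI)
  have "Q j $ k $ i = Q j $ i $ k" if "j < nq" for j i k
  proof -
    have "transpose (Q j) = Q j" using Q that by (simp add: pos_def_mat_def)
    then have "transpose (Q j) $ i $ k = Q j $ i $ k" by simp
    then show ?thesis by (simp add: transpose_def)
  qed
  then show "transpose (mixed_mat nq Q \<gamma>) = mixed_mat nq Q \<gamma>"
    by (simp add: mixed_mat_def vec_eq_iff transpose_def)
next
  fix v :: "real^'a" assume "v \<noteq> 0"
  have "\<exists>j<nq. \<gamma> j \<noteq> 0"
  proof (rule ccontr)
    assume "\<not> (\<exists>j<nq. \<gamma> j \<noteq> 0)"
    then have "(\<Sum>j<nq. \<gamma> j) = 0" by simp
    then show False using \<gamma> unfolding simplex_weights_def by simp
  qed
  then obtain j where j: "j < nq" "\<gamma> j > 0"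
    using \<gamma> unfolding simplex_weights_def by (auto simp: less_eq_real_def)
  have "0 < \<gamma> j * (v \<bullet> (Q j *v v))"
    using j Q \<open>v \<noteq> 0\<close> unfolding pos_def_mat_def by simp
  moreover have "\<forall>i\<in>{..<nq}. 0 \<le> \<gamma> i * (v \<bullet> (Q i *v v))"
    using \<gamma> Q unfolding simplex_weights_def by (auto intro!: mult_nonneg_nonneg pos_def_mat_nonneg)
  ultimately show "0 < v \<bullet> (mixed_mat nq Q \<gamma> *v v)"
    using j(1) sum_pos2[of "{..<nq}" j "\<lambda>i. \<gamma> i * (v \<bullet> (Q i *v v))"]
    by (simp add: mixed_mat_mult_vec inner_sum_right)
qed

lemma neg_semidef_mat_mixed_mat:
  fixes A :: "real^'n^'n"
  assumes lmi: "\<forall>j<nq. neg_semidef_mat (A ** Q j + Q j ** transpose A + c *\<^sub>R Q j)"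
    and \<gamma>: "simplex_weights nq \<gamma>"
  shows "neg_semidef_mat (A ** mixed_mat nq Q \<gamma> + mixed_mat nq Q \<gamma> ** transpose A + c *\<^sub>R mixed_mat nq Q \<gamma>)"
  unfolding neg_semidef_mat_def
proof
  fix v :: "real^'n"
  have "v \<bullet> ((A ** mixed_mat nq Q \<gamma> + mixed_mat nq Q \<gamma> ** transpose A + c *\<^sub>R mixed_mat nq Q \<gamma>) *v v)
      = (\<Sum>j<nq. \<gamma> j * (v \<bullet> ((A ** Q j + Q j ** transpose A + c *\<^sub>R Q j) *v v)))"
    by (simp add: matrix_vector_mult_add_rdistrib matrix_vector_mul_assoc[symmetric]
        scaleR_matrix_vector_assoc[symmetric] mixed_mat_mult_vec vec.sum matrix_scaleR_vector_ac
        inner_add_right inner_sum_right sum.distrib sum_distrib_left algebra_simps)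
  also have "\<dots> \<le> 0"
    using lmi \<gamma> unfolding simplex_weights_def neg_semidef_mat_def
    by (intro sum_nonpos) (simp add: mult_nonneg_nonpos)
  finally show "v \<bullet> ((A ** mixed_mat nq Q \<gamma> + mixed_mat nq Q \<gamma> ** transpose A + c *\<^sub>R mixed_mat nq Q \<gamma>) *v v) \<le> 0" .
qed

context
  fixes nq :: nat and Q :: "nat \<Rightarrow> real^'n^'n"
  assumes nq: "nq \<ge> 1" and Q: "\<forall>j<nq. pos_def_mat (Q j)"
begin

lemma simplex_weights_first: "simplex_weights nq (\<lambda>j. if j = 0 then 1 else 0)"
  using nq unfolding simplex_weights_def by (simp add: sum.delta)

lemma mixed_quad_nonneg: "simplex_weights nq \<gamma> \<Longrightarrow> 0 \<le> mixed_quad nq Q \<gamma> x"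
  unfolding mixed_quad_def by (rule pos_def_mat_inverse_nonneg[OF pos_def_mat_mixed_mat[OF Q]])

lemma Vc_le_mixed_quad: "simplex_weights nq \<gamma> \<Longrightarrow> Vc nq Q x \<le> mixed_quad nq Q \<gamma> x"
  unfolding Vc_eq_Inf_mixed_quad
  by (rule cInf_lower) (auto intro: mixed_quad_nonneg simp: bdd_below_def)

lemma Vc_greatest: "(\<And>\<gamma>. simplex_weights nq \<gamma> \<Longrightarrow> c \<le> mixed_quad nq Q \<gamma> x) \<Longrightarrow> c \<le> Vc nq Q x"
  unfolding Vc_eq_Inf_mixed_quad
  by (rule cInf_greatest) (use simplex_weights_first in auto)

lemma Vc_nonneg: "0 \<le> Vc nq Q x"
  by (rule Vc_greatest) (rule mixed_quad_nonneg)

lemma Vc_approx: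
  assumes "e > 0"
  obtains \<gamma> where "simplex_weights nq \<gamma>" "mixed_quad nq Q \<gamma> x < Vc nq Q x + e"
proof -
  have "\<exists>y\<in>{mixed_quad nq Q \<gamma> x | \<gamma>. simplex_weights nq \<gamma>}. y < Vc nq Q x + e"
    unfolding Vc_eq_Inf_mixed_quad by (rule cInf_lessD) (use simplex_weights_first assms in auto)
  then show ?thesis using that by blast
qed

text \<open>The variational formula \<open>x\<^sup>T P\<^sup>-\<^sup>1 x = max\<^sub>z (2 z\<^sup>T x - z\<^sup>T P z)\<close>, applied to
  \<open>P = l P\<^sub>1 + (1 - l) P\<^sub>2\<close>, splits into one term for each \<open>P\<^sub>i\<close>.\<close>
lemma Vc_add_le:
  assumes \<gamma>\<^sub>1: "simplex_weights nq \<gamma>\<^sub>1" and \<gamma>\<^sub>2: "simplex_weights nq \<gamma>\<^sub>2" and l: "0 < l" "l < 1"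
  shows "Vc nq Q (x + y) \<le> mixed_quad nq Q \<gamma>\<^sub>1 x / l + mixed_quad nq Q \<gamma>\<^sub>2 y / (1 - l)"
proof -
  define \<gamma> where "\<gamma> j = l * \<gamma>\<^sub>1 j + (1 - l) * \<gamma>\<^sub>2 j" for j
  have \<gamma>: "simplex_weights nq \<gamma>" using \<gamma>\<^sub>1 \<gamma>\<^sub>2 l unfolding simplex_weights_def \<gamma>_def
    by (simp add: sum.distrib sum_distrib_left[symmetric])
  let ?P = "mixed_mat nq Q \<gamma>" and ?P\<^sub>1 = "mixed_mat nq Q \<gamma>\<^sub>1" and ?P\<^sub>2 = "mixed_mat nq Q \<gamma>\<^sub>2"
  have P_mix: "?P *v v = l *\<^sub>R (?P\<^sub>1 *v v) + (1 - l) *\<^sub>R (?P\<^sub>2 *v v)" for v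
    unfolding mixed_mat_mult_vec \<gamma>_def by (simp add: scaleR_add_left sum.distrib scaleR_sum_right)
  define z where "z = matrix_inv ?P *v (x + y)"
  have Pz: "?P *v z = x + y"
    unfolding z_def by (rule pos_def_mat_inverse_cancel(1)[OF pos_def_mat_mixed_mat[OF Q \<gamma>]])
  have "mixed_quad nq Q \<gamma> (x + y) = 2 * (z \<bullet> (x + y)) - z \<bullet> (?P *v z)"
    unfolding mixed_quad_def z_def[symmetric] using Pz by (simp add: inner_commute)
  also have "\<dots> = (2 * (z \<bullet> x) - l * (z \<bullet> (?P\<^sub>1 *v z))) + (2 * (z \<bullet> y) - (1 - l) * (z \<bullet> (?P\<^sub>2 *v z)))"
    unfolding P_mix by (simp add: inner_add_right algebra_simps)
  also have "\<dots> \<le> mixed_quad nq Q \<gamma>\<^sub>1 x / l + mixed_quad nq Q \<gamma>\<^sub>2 y / (1 - l)"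
    unfolding mixed_quad_def using l
    by (intro add_mono inner_le_inverse_quadratic pos_def_mat_mixed_mat[OF Q] \<gamma>\<^sub>1 \<gamma>\<^sub>2) auto
  finally show ?thesis using Vc_le_mixed_quad[OF \<gamma>, of "x + y"] by linarith
qed

lemma cnorm_triangle: "cnorm nq Q (x + y) \<le> cnorm nq Q x + cnorm nq Q y"
proof (rule field_le_epsilon)
  fix d :: real assume d: "d > 0"
  define e where "e = (d / 2)\<^sup>2"
  have e: "e > 0" using d unfolding e_def by simp
  obtain \<gamma>\<^sub>1 where \<gamma>\<^sub>1: "simplex_weights nq \<gamma>\<^sub>1" "mixed_quad nq Q \<gamma>\<^sub>1 x < Vc nq Q x + e"
    using Vc_approx[OF e] by blast
  obtain \<gamma>\<^sub>2 where \<gamma>\<^sub>2: "simplex_weights nq \<gamma>\<^sub>2" "mixed_quad nq Q \<gamma>\<^sub>2 y < Vc nq Q y + e"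
    using Vc_approx[OF e] by blast
  define a where "a = sqrt (Vc nq Q x + e)"
  define b where "b = sqrt (Vc nq Q y + e)"
  have a: "a > 0" and b: "b > 0"
    unfolding a_def b_def using Vc_nonneg e by (auto intro: add_nonneg_pos)
  define l where "l = a / (a + b)"
  have l: "0 < l" "l < 1" unfolding l_def using a b by (auto simp: divide_less_eq)
  have "Vc nq Q (x + y) \<le> mixed_quad nq Q \<gamma>\<^sub>1 x / l + mixed_quad nq Q \<gamma>\<^sub>2 y / (1 - l)"
    by (rule Vc_add_le[OF \<gamma>\<^sub>1(1) \<gamma>\<^sub>2(1) l])
  also have "\<dots> \<le> a\<^sup>2 / l + b\<^sup>2 / (1 - l)"
    using \<gamma>\<^sub>1 \<gamma>\<^sub>2 l Vc_nonneg e unfolding a_def b_def by (auto intro!: add_mono divide_right_mono)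
  also have "\<dots> = (a + b)\<^sup>2"
    unfolding l_def using a b by (simp add: field_simps power2_eq_square)
  finally have "sqrt (Vc nq Q (x + y)) \<le> sqrt ((a + b)\<^sup>2)" by (rule real_sqrt_le_mono)
  then have "cnorm nq Q (x + y) \<le> a + b" unfolding cnorm_def using a b by simp
  also have "a \<le> cnorm nq Q x + d / 2"
    unfolding a_def e_def cnorm_def using sqrt_add_le_add_sqrt[OF Vc_nonneg, of "(d/2)\<^sup>2" x] d by simp
  also have "b \<le> cnorm nq Q y + d / 2"
    unfolding b_def e_def cnorm_def using sqrt_add_le_add_sqrt[OF Vc_nonneg, of "(d/2)\<^sup>2" y] d by simp
  finally show "cnorm nq Q (x + y) \<le> cnorm nq Q x + cnorm nq Q y + d" by simp
qed

lemma Vc_scaleR_le: "Vc nq Q (c *\<^sub>R x) \<le> c\<^sup>2 * Vc nq Q x"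
proof (cases "c = 0")
  case True
  then show ?thesis
    using Vc_le_mixed_quad[OF simplex_weights_first, of 0] by (simp add: mixed_quad_def)
next
  case False
  have "Vc nq Q (c *\<^sub>R x) / c\<^sup>2 \<le> Vc nq Q x"
  proof (rule Vc_greatest)
    fix \<gamma> assume \<gamma>: "simplex_weights nq \<gamma>"
    have "Vc nq Q (c *\<^sub>R x) \<le> c\<^sup>2 * mixed_quad nq Q \<gamma> x"
      using Vc_le_mixed_quad[OF \<gamma>, of "c *\<^sub>R x"]
      by (simp add: mixed_quad_def matrix_vector_mult_scaleR power2_eq_square)
    then show "Vc nq Q (c *\<^sub>R x) / c\<^sup>2 \<le> mixed_quad nq Q \<gamma> x" using False by (simp add: field_simps)
  qed
  then show ?thesis using False by (simp add: field_simps)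
qed

lemma cnorm_scaleR_le: "cnorm nq Q (c *\<^sub>R x) \<le> \<bar>c\<bar> * cnorm nq Q x"
  using real_sqrt_le_mono[OF Vc_scaleR_le[of c x]] unfolding cnorm_def by (simp add: real_sqrt_mult)

lemma convex_on_cnorm: "convex_on UNIV (cnorm nq Q)"
proof (rule convex_onI)
  fix t :: real and x y :: "real^'n" assume t: "0 < t" "t < 1"
  have "cnorm nq Q ((1 - t) *\<^sub>R x + t *\<^sub>R y) \<le> cnorm nq Q ((1 - t) *\<^sub>R x) + cnorm nq Q (t *\<^sub>R y)"
    by (rule cnorm_triangle)
  also have "\<dots> \<le> (1 - t) * cnorm nq Q x + t * cnorm nq Q y"
    using cnorm_scaleR_le[of "1 - t" x] cnorm_scaleR_le[of t y] t by simp
  finally show "cnorm nq Q ((1 - t) *\<^sub>R x + t *\<^sub>R y) \<le> (1 - t) * cnorm nq Q x + t * cnorm nq Q y" .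
qed simp

lemma cnorm_decay:
  assumes lmi: "\<forall>j<nq. neg_semidef_mat (A ** Q j + Q j ** transpose A + (2 * \<alpha>) *\<^sub>R Q j)"
    and e: "\<forall>s\<ge>0. (e has_vector_derivative A *v e s) (at s within {0..})"
    and t: "t \<ge> 0"
  shows "cnorm nq Q (e t) \<le> exp (- \<alpha> * t) * cnorm nq Q (e 0)"
proof -
  have "Vc nq Q (e t) / exp (- (2 * \<alpha>) * t) \<le> Vc nq Q (e 0)"
  proof (rule Vc_greatest)
    fix \<gamma> assume \<gamma>: "simplex_weights nq \<gamma>"
    have "mixed_quad nq Q \<gamma> (e t) \<le> exp (- (2 * \<alpha>) * t) * mixed_quad nq Q \<gamma> (e 0)"
      unfolding mixed_quad_def
      by (rule lyapunov_decay[OF pos_def_mat_mixed_mat[OF Q \<gamma>] neg_semidef_mat_mixed_mat[OF lmi \<gamma>] e t])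
    then show "Vc nq Q (e t) / exp (- (2 * \<alpha>) * t) \<le> mixed_quad nq Q \<gamma> (e 0)"
      using Vc_le_mixed_quad[OF \<gamma>, of "e t"] by (simp add: field_simps)
  qed
  then have "Vc nq Q (e t) \<le> (exp (- \<alpha> * t))\<^sup>2 * Vc nq Q (e 0)"
    by (simp add: field_simps power2_eq_square exp_add[symmetric])
  then have "sqrt (Vc nq Q (e t)) \<le> sqrt ((exp (- \<alpha> * t))\<^sup>2 * Vc nq Q (e 0))"
    by (rule real_sqrt_le_mono)
  then show ?thesis unfolding cnorm_def by (simp add: real_sqrt_mult)
qed

end

section \<open>Observable canonical form and the filter estimate\<close>

lemma mpow_commute: "M ** mpow M k = mpow M k ** M"
  by (induction k) (simp_all add: matrix_mul_assoc)

lemma mpow_Suc_mult_vec: "mpow M (Suc k) *v v = mpow M k *v (M *v v)"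
  by (simp add: mpow_commute matrix_vector_mul_assoc[symmetric])

lemma mpow_Suc_mult_vec': "mpow M (Suc k) *v v = M *v (mpow M k *v v)"
  by (simp add: matrix_vector_mul_assoc[symmetric])

lemma mpow_transpose: "mpow (transpose M) k = transpose (mpow M k)"
  by (induction k) (simp_all add: matrix_transpose_mul mpow_commute)

text \<open>Extended by \<open>e\<^sub>n = 0\<close>, so that \<open>A0\<^sup>T e\<^sub>k = e\<^sub>k\<^sub>+\<^sub>1 - ahat\<^sub>k\<^sub>+\<^sub>1 e\<^sub>0\<close> holds for all \<open>k < n\<close>.\<close>
definition coord_axis :: "(nat \<Rightarrow> 'n::finite) \<Rightarrow> nat \<Rightarrow> real^'n" where
  "coord_axis idx k = (if k < CARD('n) then axis (idx k) 1 else 0)"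

definition companion :: "(nat \<Rightarrow> 'n::finite) \<Rightarrow> real^'n \<Rightarrow> real^'n^'n" where
  "companion idx ahat = (\<chi> p q. if Suc (pos idx p) < CARD('n)
      then (if pos idx q = Suc (pos idx p) then 1 else 0)
      else - ahat $ idx (CARD('n) - 1 - pos idx q))"

lemma ctrb_T_row: "ctrb_T idx A th $ p = mpow (transpose A) (pos idx p) *v th"
  unfolding ctrb_T_def by simp

lemma ctrb_T_mult_vec: "ctrb_T idx A th *v \<beta> = (\<chi> p. \<beta> v* mpow (transpose A) (pos idx p)) *v th"
  by (simp add: vec_eq_iff matrix_vector_mul_component ctrb_T_row) (metis dot_lmul_matrix inner_commute)

lemma matrix_mult_row: "((M::real^'n^'m) ** N) $ p = (\<Sum>q\<in>UNIV. M $ p $ q *\<^sub>R N $ q)"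
  by (simp add: vec_eq_iff matrix_matrix_mult_def)

definition state_estimate ::
    "(nat \<Rightarrow> 'n::finite) \<Rightarrow> real^'n \<Rightarrow> real^'n \<Rightarrow> real^'n \<Rightarrow> real^'n \<Rightarrow> real^'n \<Rightarrow> real^'n" where
  "state_estimate idx ahat th_y th_u b_y b_u =
     (let A0 = obs_canon idx ahat; C0 = obs_matrix idx (axis (idx 0) 1) A0 in
        (matrix_inv C0 ** ctrb_T idx A0 th_y) *v b_y + (matrix_inv C0 ** ctrb_T idx A0 th_u) *v b_u)"

context
  fixes idx :: "nat \<Rightarrow> 'n::finite" and ahat :: "real^'n"
  assumes idx: "bij_betw idx {..<CARD('n)} UNIV"
begin

declare transpose_matrix_vector [simp del]

abbreviation "A0 \<equiv> obs_canon idx ahat"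
abbreviation "C0 \<equiv> obs_matrix idx (axis (idx 0) 1) A0"

lemma pos_idx: "k < CARD('n) \<Longrightarrow> pos idx (idx k) = k"
  unfolding pos_def using idx by (simp add: bij_betw_def inv_into_f_f)

lemma idx_pos: "idx (pos idx p) = p"
  unfolding pos_def using idx by (simp add: bij_betw_def f_inv_into_f)

lemma pos_less: "pos idx p < CARD('n)"
  unfolding pos_def using idx by (metis bij_betw_def inv_into_into lessThan_iff UNIV_I)

lemma pos_eq_iff: "k < CARD('n) \<Longrightarrow> pos idx q = k \<longleftrightarrow> q = idx k"
  by (metis pos_idx idx_pos)

lemma sum_coord_axis: "(\<Sum>k<CARD('n). v $ idx k *\<^sub>R coord_axis idx k) = v"
proof -
  have "(\<Sum>k<CARD('n). v $ idx k *\<^sub>R coord_axis idx k) = (\<Sum>k<CARD('n). v $ idx k *\<^sub>R axis (idx k) 1)"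
    unfolding coord_axis_def by (rule sum.cong) auto
  also have "\<dots> = (\<Sum>p\<in>UNIV. v $ p *\<^sub>R axis p 1)"
    by (rule sum.reindex_bij_betw[OF idx])
  also have "\<dots> = v" using basis_expansion[of v] by (simp add: scalar_mult_eq_scaleR)
  finally show ?thesis .
qed

lemma transpose_obs_canon_coord_axis:
  assumes k: "k < CARD('n)"
  shows "transpose A0 *v coord_axis idx k = coord_axis idx (Suc k) - ahat $ idx k *\<^sub>R coord_axis idx 0"
proof (subst vec_eq_iff, intro allI)
  fix q
  have "(transpose A0 *v coord_axis idx k) $ q = A0 $ idx k $ q"
    using k unfolding coord_axis_def
    by (simp add: matrix_vector_mult_def transpose_def axis_def if_distrib sum.delta cong: if_cong)
  also have "\<dots> = (if q = idx 0 then - ahat $ idx k else if pos idx q = Suc k then 1 else 0)"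
    using k by (simp add: obs_canon_def pos_idx)
  also have "\<dots> = (coord_axis idx (Suc k) - ahat $ idx k *\<^sub>R coord_axis idx 0) $ q"
  proof (cases "q = idx 0")
    case True
    then have "pos idx q \<noteq> Suc k" using pos_idx[of 0] by simp
    then show ?thesis using True pos_eq_iff[of "Suc k" q] by (simp add: coord_axis_def axis_def)
  next
    case False
    then show ?thesis using pos_less[of q] idx_pos[of q] pos_idx[of "Suc k"]
      by (auto simp: coord_axis_def axis_def)
  qed
  finally show "(transpose A0 *v coord_axis idx k) $ q
      = (coord_axis idx (Suc k) - ahat $ idx k *\<^sub>R coord_axis idx 0) $ q" .
qed

lemma mpow_transpose_obs_canon_coord_axis:
  "j \<le> CARD('n) \<Longrightarrow> mpow (transpose A0) j *v coord_axis idx 0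
     = coord_axis idx j - (\<Sum>i<j. ahat $ idx i *\<^sub>R (mpow (transpose A0) (j - 1 - i) *v coord_axis idx 0))"
proof (induction j)
  case 0
  then show ?case by simp
next
  case (Suc j)
  let ?u = "\<lambda>j. mpow (transpose A0) j *v coord_axis idx 0"
  have j: "j < CARD('n)" using Suc.prems by simp
  have "?u (Suc j) = transpose A0 *v ?u j" by (rule mpow_Suc_mult_vec')
  also have "\<dots> = transpose A0 *v coord_axis idx j - (\<Sum>i<j. ahat $ idx i *\<^sub>R ?u (j - i))"
  proof -
    have "transpose A0 *v ?u (j - 1 - i) = ?u (j - i)" if "i < j" for i
      using that mpow_Suc_mult_vec'[symmetric] by (metis Suc_diff_Suc diff_Suc_1 diff_commute)
    then show ?thesis
      using Suc j by (simp add: matrix_vector_mult_diff_distrib vec.sum matrix_vector_mult_scaleR)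
  qed
  also have "\<dots> = coord_axis idx (Suc j) - (\<Sum>i<Suc j. ahat $ idx i *\<^sub>R ?u (Suc j - 1 - i))"
    using transpose_obs_canon_coord_axis[OF j] by simp
  finally show ?case .
qed

text \<open>Cayley--Hamilton for \<open>A0\<^sup>T\<close>, proved on the vectors \<open>e\<^sub>k\<close>:
  \<open>e\<^sub>0\<close> is annihilated by the previous lemma for \<open>j = n\<close>, and
  \<open>e\<^sub>k\<^sub>+\<^sub>1 = A0\<^sup>T e\<^sub>k + ahat\<^sub>k\<^sub>+\<^sub>1 e\<^sub>0\<close> propagates this.\<close>
lemma cayley_hamilton_transpose_obs_canon:
  "mpow (transpose A0) (CARD('n)) *v v
     = - (\<Sum>i<CARD('n). ahat $ idx i *\<^sub>R (mpow (transpose A0) (CARD('n) - 1 - i) *v v))"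
proof -
  let ?n = "CARD('n)" and ?B = "transpose A0"
  define charpoly where "charpoly = mpow ?B ?n + (\<Sum>i<?n. ahat $ idx i *\<^sub>R mpow ?B (?n - 1 - i))"
  have charpoly_v: "charpoly *v w = mpow ?B ?n *v w + (\<Sum>i<?n. ahat $ idx i *\<^sub>R (mpow ?B (?n - 1 - i) *v w))" for w
    unfolding charpoly_def
    by (simp add: matrix_vector_mult_add_rdistrib scaleR_matrix_vector_assoc sum_matrix_vector_mult)
  have "mpow ?B k *v (?B *v w) = ?B *v (mpow ?B k *v w)" for k w
    by (metis mpow_Suc_mult_vec mpow_Suc_mult_vec')
  then have charpoly_commute: "charpoly *v (?B *v w) = ?B *v (charpoly *v w)" for w
    unfolding charpoly_v by (simp add: matrix_vector_right_distrib vec.sum matrix_vector_mult_scaleR)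
  have charpoly_e0: "charpoly *v coord_axis idx 0 = 0"
    using mpow_transpose_obs_canon_coord_axis[of ?n] unfolding charpoly_v by (simp add: coord_axis_def)
  have "charpoly *v coord_axis idx k = 0" if "k < ?n" for k
    using that
  proof (induction k)
    case 0
    show ?case by (rule charpoly_e0)
  next
    case (Suc k)
    then have "coord_axis idx (Suc k) = ?B *v coord_axis idx k + ahat $ idx k *\<^sub>R coord_axis idx 0"
      using transpose_obs_canon_coord_axis[of k] by simp
    then show ?case
      using Suc charpoly_e0 by (simp add: matrix_vector_right_distrib matrix_vector_mult_scaleR charpoly_commute)
  qed
  then have "charpoly *v v = 0"
    using sum_coord_axis[of v] by (metis (no_types, lifting) vec.sum matrix_vector_mult_scaleR
        scaleR_zero_right sum.neutral lessThan_iff)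
  then show ?thesis unfolding charpoly_v by (simp add: add_eq_0_iff)
qed

lemma ctrb_T_transpose_obs_canon:
  "ctrb_T idx A0 (transpose A0 *v th) = companion idx ahat ** ctrb_T idx A0 th"
proof (subst vec_eq_iff, intro allI)
  fix p
  let ?n = "CARD('n)" and ?B = "transpose A0" and ?k = "pos idx p"
  have "ctrb_T idx A0 (?B *v th) $ p = mpow ?B (Suc ?k) *v th"
    unfolding ctrb_T_row by (rule mpow_Suc_mult_vec[symmetric])
  also have "\<dots> = (\<Sum>q\<in>UNIV. companion idx ahat $ p $ q *\<^sub>R (mpow ?B (pos idx q) *v th))"
  proof (cases "Suc ?k < ?n")
    case True
    then have "companion idx ahat $ p $ q *\<^sub>R (mpow ?B (pos idx q) *v th)
        = (if q = idx (Suc ?k) then mpow ?B (Suc ?k) *v th else 0)" for q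
      using pos_eq_iff[OF True, of q] unfolding companion_def by auto
    then show ?thesis by simp
  next
    case False
    then have n: "?n = Suc ?k" using pos_less[of p] by simp
    have "(\<Sum>q\<in>UNIV. companion idx ahat $ p $ q *\<^sub>R (mpow ?B (pos idx q) *v th))
        = (\<Sum>q\<in>UNIV. - ahat $ idx (?n - 1 - pos idx q) *\<^sub>R (mpow ?B (pos idx q) *v th))"
      using False unfolding companion_def by simp
    also have "\<dots> = (\<Sum>k<?n. - ahat $ idx (?n - 1 - k) *\<^sub>R (mpow ?B k *v th))"
      by (simp add: sum.reindex_bij_betw[OF idx, symmetric] pos_idx)
    also have "\<dots> = - (\<Sum>i<?n. ahat $ idx i *\<^sub>R (mpow ?B (?n - 1 - i) *v th))"
      by (subst sum.nat_diff_reindex[symmetric]) (simp add: sum_negf)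
    also have "\<dots> = mpow ?B (Suc ?k) *v th"
      using cayley_hamilton_transpose_obs_canon n by simp
    finally show ?thesis by simp
  qed
  also have "\<dots> = (companion idx ahat ** ctrb_T idx A0 th) $ p"
    unfolding matrix_mult_row ctrb_T_row ..
  finally show "ctrb_T idx A0 (?B *v th) $ p = (companion idx ahat ** ctrb_T idx A0 th) $ p" .
qed

lemma ctrb_T_coord_axis: "ctrb_T idx A0 (coord_axis idx 0) = C0"
  unfolding ctrb_T_def obs_matrix_def coord_axis_def
  by (simp add: mpow_transpose transpose_matrix_vector)

lemma obs_matrix_invertible: "invertible C0"
proof (rule invertible_if_trivial_kernel)
  fix v assume C0v: "C0 *v v = 0"
  let ?u = "\<lambda>j. mpow (transpose A0) j *v coord_axis idx 0"
  have u: "?u k \<bullet> v = 0" if "k < CARD('n)" for k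
    using C0v ctrb_T_row[of idx A0 "coord_axis idx 0" "idx k"]
    by (metis ctrb_T_coord_axis matrix_vector_mul_component pos_idx[OF that] zero_index)
  have "v $ idx j = 0" if j: "j < CARD('n)" for j
  proof -
    have "coord_axis idx j = ?u j + (\<Sum>i<j. ahat $ idx i *\<^sub>R ?u (j - 1 - i))"
      using mpow_transpose_obs_canon_coord_axis[of j] j by simp
    then have "coord_axis idx j \<bullet> v = ?u j \<bullet> v + (\<Sum>i<j. ahat $ idx i * (?u (j - 1 - i) \<bullet> v))"
      by (simp add: inner_add_left inner_sum_left)
    then show ?thesis using u j by (simp add: coord_axis_def inner_axis')
  qed
  then show "v = 0" by (metis idx_pos pos_less vec_eq_iff zero_index)
qed

lemma obs_matrix_obs_canon: "C0 ** A0 = companion idx ahat ** C0"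
proof -
  have "C0 ** A0 = ctrb_T idx A0 (transpose A0 *v coord_axis idx 0)"
  proof (subst vec_eq_iff, intro allI)
    fix p
    have "(C0 ** A0) $ p = transpose A0 *v (C0 $ p)"
      by (simp add: vec_eq_iff matrix_matrix_mult_def transpose_matrix_vector vector_matrix_mult_def)
    also have "\<dots> = ctrb_T idx A0 (transpose A0 *v coord_axis idx 0) $ p"
      by (metis ctrb_T_coord_axis ctrb_T_row mpow_Suc_mult_vec mpow_Suc_mult_vec')
    finally show "(C0 ** A0) $ p = ctrb_T idx A0 (transpose A0 *v coord_axis idx 0) $ p" .
  qed
  then show ?thesis by (simp add: ctrb_T_transpose_obs_canon ctrb_T_coord_axis)
qed

lemma matrix_inv_obs_matrix_ctrb_T:
  "matrix_inv C0 ** ctrb_T idx A0 (transpose A0 *v th) = A0 ** (matrix_inv C0 ** ctrb_T idx A0 th)"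
proof -
  note C0_inv = matrix_inv_invertible[OF obs_matrix_invertible]
  have "matrix_inv C0 ** companion idx ahat = matrix_inv C0 ** companion idx ahat ** (C0 ** matrix_inv C0)"
    by (simp add: C0_inv)
  also have "\<dots> = matrix_inv C0 ** (C0 ** A0) ** matrix_inv C0"
    by (simp add: matrix_mul_assoc obs_matrix_obs_canon)
  also have "\<dots> = A0 ** matrix_inv C0"
    by (simp add: matrix_mul_assoc C0_inv)
  finally show ?thesis by (simp add: ctrb_T_transpose_obs_canon matrix_mul_assoc)
qed

lemma filter_estimate_has_derivative:
  assumes "(th has_vector_derivative transpose A0 *v th t + axis (idx 0) c) F"
  shows "((\<lambda>s. (matrix_inv C0 ** ctrb_T idx A0 (th s)) *v \<beta>) has_vector_derivative
           A0 *v ((matrix_inv C0 ** ctrb_T idx A0 (th t)) *v \<beta>) + c *\<^sub>R \<beta>) F"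
proof -
  define K where "K = (\<chi> p. \<beta> v* mpow (transpose A0) (pos idx p))"
  have linear: "(matrix_inv C0 ** ctrb_T idx A0 w) *v \<beta> = (matrix_inv C0 ** K) *v w" for w
    unfolding K_def by (simp add: ctrb_T_mult_vec matrix_vector_mul_assoc[symmetric])
  have deriv: "((\<lambda>s. (matrix_inv C0 ** K) *v th s) has_vector_derivative
      (matrix_inv C0 ** K) *v (transpose A0 *v th t + axis (idx 0) c)) F"
    by (rule bounded_linear.has_vector_derivative[OF matrix_vector_mul_bounded_linear assms])
  have rhs: "(matrix_inv C0 ** K) *v (transpose A0 *v th t + axis (idx 0) c)
      = A0 *v ((matrix_inv C0 ** ctrb_T idx A0 (th t)) *v \<beta>) + c *\<^sub>R \<beta>"
  proof -
    have "axis (idx 0) c = c *\<^sub>R coord_axis idx 0" by (simp add: coord_axis_def vec_eq_iff axis_def)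
    then have "(matrix_inv C0 ** K) *v (transpose A0 *v th t + axis (idx 0) c)
        = (matrix_inv C0 ** K) *v (transpose A0 *v th t) + c *\<^sub>R ((matrix_inv C0 ** K) *v coord_axis idx 0)"
      by (simp add: matrix_vector_right_distrib matrix_vector_mult_scaleR)
    also have "\<dots> = (matrix_inv C0 ** ctrb_T idx A0 (transpose A0 *v th t)) *v \<beta>
        + c *\<^sub>R ((matrix_inv C0 ** ctrb_T idx A0 (coord_axis idx 0)) *v \<beta>)"
      by (simp only: linear)
    also have "\<dots> = A0 *v ((matrix_inv C0 ** ctrb_T idx A0 (th t)) *v \<beta>) + c *\<^sub>R \<beta>"
      by (simp add: matrix_inv_obs_matrix_ctrb_T ctrb_T_coord_axis matrix_vector_mul_assoc
          matrix_inv_invertible[OF obs_matrix_invertible])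
    finally show ?thesis .
  qed
  show ?thesis
    using has_vector_derivative_eq_rhs[OF deriv rhs] by (simp only: linear)
qed

lemma estimation_error_has_derivative:
  assumes x: "(x has_vector_derivative A0 *v x s + (x s $ idx 0) *\<^sub>R b_y + u s *\<^sub>R b_u) F"
    and th_y: "(th_y has_vector_derivative transpose A0 *v th_y s + axis (idx 0) (x s $ idx 0)) F"
    and th_u: "(th_u has_vector_derivative transpose A0 *v th_u s + axis (idx 0) (u s)) F"
  shows "((\<lambda>s. x s - state_estimate idx ahat (th_y s) (th_u s) b_y b_u) has_vector_derivative
           A0 *v (x s - state_estimate idx ahat (th_y s) (th_u s) b_y b_u)) F"
proof -
  let ?E = "\<lambda>th. matrix_inv C0 ** ctrb_T idx A0 th"
  have "((\<lambda>s. x s - (?E (th_y s) *v b_y + ?E (th_u s) *v b_u)) has_vector_derivative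
      (A0 *v x s + (x s $ idx 0) *\<^sub>R b_y + u s *\<^sub>R b_u)
      - ((A0 *v (?E (th_y s) *v b_y) + (x s $ idx 0) *\<^sub>R b_y) + (A0 *v (?E (th_u s) *v b_u) + u s *\<^sub>R b_u))) F"
    by (intro has_vector_derivative_diff has_vector_derivative_add x
        filter_estimate_has_derivative th_y th_u)
  then show ?thesis
    unfolding state_estimate_def Let_def
    by (rule has_vector_derivative_eq_rhs) (simp add: matrix_vector_mult_diff_distrib matrix_vector_right_distrib)
qed

end

section \<open>Vertices of parameter boxes\<close>

lemma unit_cube_subset_convex_hull_vertices:
  "{w::real^'n. \<forall>i. 0 \<le> w$i \<and> w$i \<le> 1} \<subseteq> convex hull {w. \<forall>i. w$i = 0 \<or> w$i = 1}"
proof -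
  have "cbox (0::real^'n) 1 = convex hull {w. \<forall>i. w$i = 0 \<or> w$i = 1}"
    using unit_interval_convex_hull[where 'a = "real^'n", unfolded Cart_1[symmetric]]
    by (simp add: Basis_vec_def inner_axis)
  moreover have "{w::real^'n. \<forall>i. 0 \<le> w$i \<and> w$i \<le> 1} = cbox 0 1"
    by (auto simp: mem_box_cart)
  ultimately show ?thesis by simp
qed

lemma affine_image_mem_convex_hull_box_vertices:
  fixes lo hi z :: "real^'n" and f :: "real^'n \<Rightarrow> 'a::real_vector"
  assumes box: "\<forall>p. lo$p \<le> z$p \<and> z$p \<le> hi$p"
    and f: "\<And>x y u. f ((1 - u) *\<^sub>R x + u *\<^sub>R y) = (1 - u) *\<^sub>R f x + u *\<^sub>R f y"
  shows "f z \<in> convex hull {f (\<chi> p. if s p then hi$p else lo$p) | s. True}"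
proof -
  let ?K = "convex hull {f (\<chi> p. if s p then hi$p else lo$p) | s. True}"
  define L where "L w = (\<chi> p. lo$p + (hi$p - lo$p) * w$p)" for w :: "real^'n"
  have L: "L ((1 - u) *\<^sub>R x + u *\<^sub>R y) = (1 - u) *\<^sub>R L x + u *\<^sub>R L y" for x y u
    by (simp add: L_def vec_eq_iff algebra_simps)
  have "convex {w. f (L w) \<in> ?K}"
  proof (rule convexI)
    fix x y and u v :: real
    assume "x \<in> {w. f (L w) \<in> ?K}" "y \<in> {w. f (L w) \<in> ?K}" "0 \<le> u" "0 \<le> v" "u + v = 1"
    then show "u *\<^sub>R x + v *\<^sub>R y \<in> {w. f (L w) \<in> ?K}"
      using L[of v x y] f[of v "L x" "L y"] convexD[OF convex_convex_hull, of "f (L x)" _ "f (L y)" u v]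
      by (simp add: eq_diff_eq[symmetric])
  qed
  moreover have "{w. \<forall>i. w$i = 0 \<or> w$i = 1} \<subseteq> {w. f (L w) \<in> ?K}"
  proof
    fix w :: "real^'n" assume "w \<in> {w. \<forall>i. w$i = 0 \<or> w$i = 1}"
    then have "L w = (\<chi> p. if w$p = 1 then hi$p else lo$p)" by (auto simp: L_def vec_eq_iff)
    then show "w \<in> {w. f (L w) \<in> ?K}" by (auto intro: hull_inc)
  qed
  ultimately have "convex hull {w. \<forall>i. w$i = 0 \<or> w$i = 1} \<subseteq> {w. f (L w) \<in> ?K}"
    by (rule hull_minimal[rotated])
  moreover define w where "w = (\<chi> p. if lo$p = hi$p then 0 else (z$p - lo$p) / (hi$p - lo$p))"
  have "0 \<le> w$p \<and> w$p \<le> 1" for p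
    using box[rule_format, of p] by (auto simp: w_def divide_le_eq_1 less_le)
  then have "w \<in> convex hull {w. \<forall>i. w$i = 0 \<or> w$i = 1}"
    using unit_cube_subset_convex_hull_vertices by blast
  moreover have "L w = z"
  proof -
    have "lo$p + (hi$p - lo$p) * w$p = z$p" for p
      using box[rule_format, of p] by (auto simp: w_def)
    then show ?thesis by (simp add: L_def vec_eq_iff)
  qed
  ultimately show ?thesis by auto
qed

lemma box_images_mem_convex_hull_vertices:
  fixes M N :: "real^'n^'m" and c a b alo ahi blo bhi :: "real^'n"
  assumes a: "\<forall>p. alo$p \<le> a$p \<and> a$p \<le> ahi$p" and b: "\<forall>p. blo$p \<le> b$p \<and> b$p \<le> bhi$p"
  shows "M *v (c - a) + N *v b \<in> convex hull {M *v (\<chi> p. c$p - (if sa p then ahi$p else alo$p))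
           + N *v (\<chi> p. if sb p then bhi$p else blo$p) | sa sb. True}"
    (is "_ \<in> convex hull ?S")
proof -
  have affine: "M *v (c - ((1 - u) *\<^sub>R x + u *\<^sub>R y)) + N *v z
      = (1 - u) *\<^sub>R (M *v (c - x) + N *v z) + u *\<^sub>R (M *v (c - y) + N *v z)"
    "M *v z + N *v ((1 - u) *\<^sub>R x + u *\<^sub>R y)
      = (1 - u) *\<^sub>R (M *v z + N *v x) + u *\<^sub>R (M *v z + N *v y)" for x y z u
    by (simp_all add: matrix_vector_right_distrib matrix_vector_mult_diff_distrib
        matrix_vector_mult_scaleR algebra_simps)
  have vertex_a: "c - (\<chi> p. if sa p then ahi$p else alo$p) = (\<chi> p. c$p - (if sa p then ahi$p else alo$p))"
    for sa :: "'n \<Rightarrow> bool"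
    by (simp add: vec_eq_iff)
  have "M *v (c - (\<chi> p. if sa p then ahi$p else alo$p)) + N *v b \<in> convex hull ?S" for sa
  proof -
    have "M *v (c - (\<chi> p. if sa p then ahi$p else alo$p)) + N *v b \<in> convex hull
        {M *v (c - (\<chi> p. if sa p then ahi$p else alo$p)) + N *v (\<chi> p. if sb p then bhi$p else blo$p) | sb. True}"
      by (rule affine_image_mem_convex_hull_box_vertices[OF b]) (rule affine(2))
    moreover have "{M *v (c - (\<chi> p. if sa p then ahi$p else alo$p)) + N *v (\<chi> p. if sb p then bhi$p else blo$p)
        | sb. True} \<subseteq> ?S"
      unfolding vertex_a by blast
    ultimately show ?thesis by (meson hull_mono subsetD)
  qed
  then have "{M *v (c - (\<chi> p. if sa p then ahi$p else alo$p)) + N *v b | sa. True} \<subseteq> convex hull ?S"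
    by blast
  then have "convex hull {M *v (c - (\<chi> p. if sa p then ahi$p else alo$p)) + N *v b | sa. True}
      \<subseteq> convex hull ?S"
    by (simp add: convex_hull_subset)
  moreover have "M *v (c - a) + N *v b
      \<in> convex hull {M *v (c - (\<chi> p. if sa p then ahi$p else alo$p)) + N *v b | sa. True}"
    by (rule affine_image_mem_convex_hull_box_vertices[OF a]) (rule affine(1))
  ultimately show ?thesis by blast
qed

lemma convex_on_le_extreme_point:
  fixes S :: "'a::euclidean_space set"
  assumes "finite S" "x \<in> convex hull S" "convex_on UNIV f"
  obtains v where "v extreme_point_of convex hull S" "f x \<le> f v"
proof -
  let ?E = "{v. v extreme_point_of convex hull S}"
  have hull_E: "convex hull S = convex hull ?E"
    by (rule Krein_Milman_Minkowski[OF finite_imp_compact_convex_hull[OF assms(1)] convex_convex_hull])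
  have "finite ?E"
    using assms(1) extreme_point_of_convex_hull finite_subset by (metis mem_Collect_eq subsetI)
  moreover have "?E \<noteq> {}" using assms(2) hull_E by (metis convex_hull_empty empty_iff)
  moreover have "f x \<le> Max (f ` ?E)"
    using convex_on_convex_hull_bound[OF convex_on_subset[OF assms(3)], of ?E "Max (f ` ?E)"]
      assms(2) hull_E \<open>finite ?E\<close> by simp
  ultimately show ?thesis using that by (metis (mono_tags, lifting) Max_in finite_imageI image_iff image_is_empty mem_Collect_eq)
qed

lemma convex_on_box_images_le_extreme_point:
  fixes M N :: "real^'n^'m" and c a b alo ahi blo bhi :: "real^'n"
  assumes a: "\<forall>p. alo$p \<le> a$p \<and> a$p \<le> ahi$p" and b: "\<forall>p. blo$p \<le> b$p \<and> b$p \<le> bhi$p"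
    and f: "convex_on UNIV f"
  obtains v where "v extreme_point_of convex hull {M *v (\<chi> p. c$p - (if sa p then ahi$p else alo$p))
           + N *v (\<chi> p. if sb p then bhi$p else blo$p) | sa sb. True}"
    and "f (M *v (c - a) + N *v b) \<le> f v"
proof -
  have "{M *v (\<chi> p. c$p - (if sa p then ahi$p else alo$p)) + N *v (\<chi> p. if sb p then bhi$p else blo$p)
      | sa sb. True} = (\<lambda>(sa, sb). M *v (\<chi> p. c$p - (if sa p then ahi$p else alo$p))
      + N *v (\<chi> p. if sb p then bhi$p else blo$p)) ` UNIV"
    by auto
  then have "finite {M *v (\<chi> p. c$p - (if sa p then ahi$p else alo$p))
      + N *v (\<chi> p. if sb p then bhi$p else blo$p) | sa sb. True}"
    by simp
  then show ?thesis
    using convex_on_le_extreme_point[OF _ box_images_mem_convex_hull_vertices[OF a b] f] that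
    by blast
qed

theorem theorem2:
  fixes idx :: "nat \<Rightarrow> 'n::finite"
    and ahat a alo ahi b blo bhi :: "real^'n"
    and x th_y th_u :: "real \<Rightarrow> real^'n"
    and u :: "real \<Rightarrow> real"
    and nq :: nat and Q :: "nat \<Rightarrow> real^'n^'n" and \<alpha> :: real
  assumes idx: "bij_betw idx {..<CARD('n)} UNIV"
    and stable: "\<forall>z::complex. z ^ CARD('n) + (\<Sum>k<CARD('n). of_real (ahat $ idx k) * z ^ (CARD('n) - Suc k)) = 0
                  \<longrightarrow> Re z < 0"
    and a_box: "\<forall>p. alo $ p \<le> a $ p \<and> a $ p \<le> ahi $ p"
    and b_box: "\<forall>p. blo $ p \<le> b $ p \<and> b $ p \<le> bhi $ p"
    and x_ode: "\<forall>t\<ge>0. (x has_vector_derivative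
        (obs_canon idx ahat *v x t + (x t $ idx 0) *\<^sub>R (ahat - a) + u t *\<^sub>R b)) (at t within {0..})"
    and thy_ode: "\<forall>t\<ge>0. (th_y has_vector_derivative
        (transpose (obs_canon idx ahat) *v th_y t + axis (idx 0) (x t $ idx 0))) (at t within {0..})"
    and thu_ode: "\<forall>t\<ge>0. (th_u has_vector_derivative
        (transpose (obs_canon idx ahat) *v th_u t + axis (idx 0) (u t))) (at t within {0..})"
    and nq: "nq \<ge> 1"
    and Qpd: "\<forall>j<nq. pos_def_mat (Q j)"
    and lmi: "\<forall>j<nq. neg_semidef_mat (obs_canon idx ahat ** Q j + Q j ** transpose (obs_canon idx ahat)
                 + (2 * \<alpha>) *\<^sub>R Q j)"
  shows "\<forall>t\<ge>0. \<exists>v.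
     v extreme_point_of convex hull
       { let A0 = obs_canon idx ahat; C0 = obs_matrix idx (axis (idx 0) 1) A0 in
           (matrix_inv C0 ** ctrb_T idx A0 (th_y t)) *v (\<chi> p. ahat $ p - (if sa p then ahi $ p else alo $ p))
         + (matrix_inv C0 ** ctrb_T idx A0 (th_u t)) *v (\<chi> p. if sb p then bhi $ p else blo $ p)
         | sa sb. True }
     \<and> cnorm nq Q (x t) \<le> cnorm nq Q v + exp (- \<alpha> * t) *
         cnorm nq Q (let A0 = obs_canon idx ahat; C0 = obs_matrix idx (axis (idx 0) 1) A0 in
            x 0 - ((matrix_inv C0 ** ctrb_T idx A0 (th_y 0)) *v (ahat - a)
                   + (matrix_inv C0 ** ctrb_T idx A0 (th_u 0)) *v b))"
proof -
  have "\<exists>v. v extreme_point_of convex hull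
       {state_estimate idx ahat (th_y t) (th_u t) (\<chi> p. ahat $ p - (if sa p then ahi $ p else alo $ p))
          (\<chi> p. if sb p then bhi $ p else blo $ p) | sa sb. True}
     \<and> cnorm nq Q (x t) \<le> cnorm nq Q v + exp (- \<alpha> * t) *
         cnorm nq Q (x 0 - state_estimate idx ahat (th_y 0) (th_u 0) (ahat - a) b)"
    (is "\<exists>v. v extreme_point_of convex hull ?V \<and> _")
    if t: "t \<ge> 0" for t
  proof -
    let ?xhat = "\<lambda>s. state_estimate idx ahat (th_y s) (th_u s) (ahat - a) b"
    have "\<forall>s\<ge>0. ((\<lambda>s. x s - ?xhat s) has_vector_derivative obs_canon idx ahat *v (x s - ?xhat s))
        (at s within {0..})"
      using estimation_error_has_derivative[OF idx] x_ode thy_ode thu_ode by blast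
    then have decay: "cnorm nq Q (x t - ?xhat t) \<le> exp (- \<alpha> * t) * cnorm nq Q (x 0 - ?xhat 0)"
      by (rule cnorm_decay[OF nq Qpd lmi _ t])
    obtain v where v: "v extreme_point_of convex hull ?V" "cnorm nq Q (?xhat t) \<le> cnorm nq Q v"
      using convex_on_box_images_le_extreme_point[OF a_box b_box convex_on_cnorm[OF nq Qpd]]
      unfolding state_estimate_def Let_def by blast
    have "cnorm nq Q (x t) \<le> cnorm nq Q (?xhat t) + cnorm nq Q (x t - ?xhat t)"
      using cnorm_triangle[OF nq Qpd, of "?xhat t" "x t - ?xhat t"] by simp
    then show ?thesis using v decay by force
  qed
  then show ?thesis unfolding state_estimate_def Let_def by blast
qed

end
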